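(* Let $p\ge1$, $\sigma^2>0$, $\boldsymbol\beta\in\mathbb{R}^p$ not identically zero with $\beta_1\le\cdots\le\beta_p$, $\delta_1^2,\dots,\delta_p^2>0$, $\sum_{i=1}^p\beta_i/\delta_i^2\ge0$, and $\Sigma=\sigma^2\boldsymbol\beta\boldsymbol\beta^\top+\mathrm{diag}(\delta_1^2,\dots,\delta_p^2)$. Let $w^L$ be the solution of $\min_w w^\top\Sigma w$ subject to $w^\top\mathbf{1}_p=1$, $w\ge0$, let $K=\{i:w^L_i>0\}$ and $k=|K|$, and suppose $k<p$. Suppose $q>0$ additional assets are added, with betas $\beta_{p+1},\dots,\beta_{p+q}$ and idiosyncratic variances $\delta_{p+1}^2,\dots,\delta_{p+q}^2>0$, giving the enlarged covariance matrix $\Sigma'=\sigma^2\boldsymbol\beta'\boldsymbol\beta'^\top+\mathrm{diag}(\delta_1^2,\dots,\delta_{p+q}^2)$ on $p+q$ assets. If $\beta_{p+m}\ge\beta_{k+1}$ for all $m=1,\dots,q$, then the long-only minimum variance portfolio of the enlarged market has the same active set $K$, and the weights of the assets in $K$ are the same as in $w^L$ (all added assets receive weight zero).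
   Context: The long-only minimum variance portfolio for a positive definite covariance $\Sigma$ on $n$ assets is the unique minimizer of $w^\top\Sigma w$ over $w\in\mathbb{R}^n$ with $\sum_i w_i=1$, $w_i\ge0$. Its active set is the set of indices with strictly positive weight. *)

theory Defs
  imports Complex_Main
begin

text \<open>Assets are indexed by 1..n. A covariance matrix is a function nat => nat => real,
  a portfolio a function nat => real (only entries 1..n matter).\<close>

definition one_factor_cov :: "real \<Rightarrow> (nat \<Rightarrow> real) \<Rightarrow> (nat \<Rightarrow> real) \<Rightarrow> nat \<Rightarrow> nat \<Rightarrow> real" where
  "one_factor_cov s2 beta d2 i j = s2 * beta i * beta j + (if i = j then d2 i else 0)"

definition port_var :: "nat \<Rightarrow> (nat \<Rightarrow> nat \<Rightarrow> real) \<Rightarrow> (nat \<Rightarrow> real) \<Rightarrow> real" where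
  "port_var n S w = (\<Sum>i=1..n. \<Sum>j=1..n. w i * S i j * w j)"

definition long_only_feasible :: "nat \<Rightarrow> (nat \<Rightarrow> real) \<Rightarrow> bool" where
  "long_only_feasible n w \<longleftrightarrow> (\<forall>i\<in>{1..n}. 0 \<le> w i) \<and> (\<Sum>i=1..n. w i) = 1"

definition is_lomv :: "nat \<Rightarrow> (nat \<Rightarrow> nat \<Rightarrow> real) \<Rightarrow> (nat \<Rightarrow> real) \<Rightarrow> bool" where
  "is_lomv n S w \<longleftrightarrow> long_only_feasible n w \<and>
     (\<forall>v. long_only_feasible n v \<longrightarrow> port_var n S w \<le> port_var n S v)"

definition active_set :: "nat \<Rightarrow> (nat \<Rightarrow> real) \<Rightarrow> nat set" where
  "active_set n w = {i\<in>{1..n}. 0 < w i}"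

end

theory Submission
  imports Defs
begin

text \<open>
  In the one-factor model the portfolio variance is \<open>s2 * b\<^sup>2 + (\<Sum>i. d2 i * w i\<^sup>2)\<close> with
  factor exposure \<open>b = (\<Sum>i. beta i * w i)\<close>, and half its gradient is
  \<open>g i = s2 * beta i * b + d2 i * w i\<close>. A feasible \<open>w\<close> is the long-only minimiser iff, for some
  multiplier \<open>lam\<close>, \<open>g i \<ge> lam\<close> for every asset with equality on the active set; the variance is
  strictly convex, so such a point is the unique minimiser, and \<open>lam\<close> equals the minimal
  variance, hence is positive. If some asset is inactive, the tilt condition
  \<open>(\<Sum>i. beta i / d2 i) \<ge> 0\<close> forces \<open>b > 0\<close>; then the active assets are exactly those with
  \<open>s2 * beta i * b < lam\<close>, i.e. the \<open>k\<close> smallest betas, and \<open>lam \<le> s2 * beta (k + 1) * b\<close>.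
  An added asset whose beta is at least \<open>beta (k + 1)\<close> therefore satisfies the KKT inequality at
  weight zero, so the old portfolio padded with zeros is the minimiser of the enlarged market.
\<close>

definition factor_exposure :: "nat \<Rightarrow> (nat \<Rightarrow> real) \<Rightarrow> (nat \<Rightarrow> real) \<Rightarrow> real" where
  "factor_exposure n beta w = (\<Sum>i=1..n. beta i * w i)"

definition one_factor_var ::
  "nat \<Rightarrow> real \<Rightarrow> (nat \<Rightarrow> real) \<Rightarrow> (nat \<Rightarrow> real) \<Rightarrow> (nat \<Rightarrow> real) \<Rightarrow> real" where
  "one_factor_var n s2 beta d2 w = s2 * (factor_exposure n beta w)^2 + (\<Sum>i=1..n. d2 i * (w i)^2)"

definition marginal_var ::
  "nat \<Rightarrow> real \<Rightarrow> (nat \<Rightarrow> real) \<Rightarrow> (nat \<Rightarrow> real) \<Rightarrow> (nat \<Rightarrow> real) \<Rightarrow> nat \<Rightarrow> real" where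
  "marginal_var n s2 beta d2 w i = s2 * beta i * factor_exposure n beta w + d2 i * w i"

lemma port_var_one_factor_cov:
  "port_var n (one_factor_cov s2 beta d2) w = one_factor_var n s2 beta d2 w"
proof -
  have "port_var n (one_factor_cov s2 beta d2) w =
      (\<Sum>i=1..n. \<Sum>j=1..n. s2 * (beta i * w i) * (beta j * w j)) +
      (\<Sum>i=1..n. \<Sum>j=1..n. if i = j then d2 i * w i * w j else 0)"
    unfolding port_var_def one_factor_cov_def sum.distrib[symmetric]
    by (intro sum.cong refl) (simp add: algebra_simps)
  moreover have "s2 * (factor_exposure n beta w)^2 =
      (\<Sum>i=1..n. \<Sum>j=1..n. s2 * (beta i * w i) * (beta j * w j))"
    unfolding factor_exposure_def power2_eq_square sum_product
    by (simp add: sum_distrib_left mult.assoc)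
  moreover have "(\<Sum>i=1..n. \<Sum>j=1..n. if i = j then d2 i * w i * w j else 0) =
      (\<Sum>i=1..n. d2 i * (w i)^2)"
    by (simp add: power2_eq_square mult.assoc)
  ultimately show ?thesis
    unfolding one_factor_var_def by simp
qed

lemma one_factor_var_expand:
  "one_factor_var n s2 beta d2 v = one_factor_var n s2 beta d2 w
     + 2 * (\<Sum>i=1..n. (v i - w i) * marginal_var n s2 beta d2 w i)
     + s2 * (factor_exposure n beta (\<lambda>i. v i - w i))^2 + (\<Sum>i=1..n. d2 i * (v i - w i)^2)"
proof -
  define b where "b = factor_exposure n beta w"
  define c where "c = factor_exposure n beta (\<lambda>i. v i - w i)"
  have exposure_v: "factor_exposure n beta v = b + c"
    by (simp add: b_def c_def factor_exposure_def sum.distrib[symmetric] algebra_simps)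
  have linear_term: "(\<Sum>i=1..n. (v i - w i) * marginal_var n s2 beta d2 w i)
      = s2 * b * c + (\<Sum>i=1..n. d2 i * w i * (v i - w i))"
    unfolding marginal_var_def b_def[symmetric] c_def
    unfolding factor_exposure_def sum_distrib_left sum.distrib[symmetric]
    by (intro sum.cong refl) (auto simp: algebra_simps)
  have idio_term: "(\<Sum>i=1..n. d2 i * (v i)^2) = (\<Sum>i=1..n. d2 i * (w i)^2)
      + 2 * (\<Sum>i=1..n. d2 i * w i * (v i - w i)) + (\<Sum>i=1..n. d2 i * (v i - w i)^2)"
    unfolding sum_distrib_left sum.distrib[symmetric]
    by (intro sum.cong refl) (auto simp: power2_eq_square algebra_simps)
  show ?thesis
    unfolding one_factor_var_def exposure_v linear_term idio_term b_def[symmetric] c_def[symmetric]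
    by (simp add: power2_eq_square algebra_simps)
qed

lemma sum_transfer_diff:
  fixes f :: "nat \<Rightarrow> real \<Rightarrow> real"
  assumes "finite A" "i \<in> A" "j \<in> A" "i \<noteq> j" "\<And>k. f k 0 = 0"
  shows "(\<Sum>k\<in>A. f k ((w(i := w i - e, j := w j + e)) k - w k)) = f i (- e) + f j e"
proof -
  have "(\<Sum>k\<in>A. f k ((w(i := w i - e, j := w j + e)) k - w k))
      = (\<Sum>k\<in>A. (if k = i then f i (- e) else 0) + (if k = j then f j e else 0))"
    using assms(4,5) by (intro sum.cong refl) auto
  also have "\<dots> = f i (- e) + f j e"
    using assms(1-3) by (simp add: sum.distrib)
  finally show ?thesis .
qed

lemma one_factor_var_transfer:
  assumes "i \<in> {1..n}" "j \<in> {1..n}" "i \<noteq> j"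
  shows "one_factor_var n s2 beta d2 (w(i := w i - e, j := w j + e)) = one_factor_var n s2 beta d2 w
     + 2 * e * (marginal_var n s2 beta d2 w j - marginal_var n s2 beta d2 w i)
     + e^2 * (s2 * (beta j - beta i)^2 + d2 i + d2 j)"
proof -
  let ?v = "w(i := w i - e, j := w j + e)"
  have linear_term: "(\<Sum>k=1..n. (?v k - w k) * marginal_var n s2 beta d2 w k)
      = e * (marginal_var n s2 beta d2 w j - marginal_var n s2 beta d2 w i)"
    using sum_transfer_diff[OF _ assms,
        where f = "\<lambda>k x. x * marginal_var n s2 beta d2 w k" and w = w and e = e]
    by (simp add: algebra_simps)
  have exposure_term: "factor_exposure n beta (\<lambda>k. ?v k - w k) = e * (beta j - beta i)"
    using sum_transfer_diff[OF _ assms, where f = "\<lambda>k x. beta k * x" and w = w and e = e]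
    by (simp add: factor_exposure_def algebra_simps)
  have idio_term: "(\<Sum>k=1..n. d2 k * (?v k - w k)^2) = e^2 * (d2 i + d2 j)"
    using sum_transfer_diff[OF _ assms, where f = "\<lambda>k x. d2 k * x^2" and w = w and e = e]
    by (simp add: algebra_simps)
  show ?thesis
    unfolding one_factor_var_expand[where v = ?v and w = w] linear_term exposure_term idio_term
    by (simp add: power2_eq_square algebra_simps)
qed

lemma long_only_feasible_transfer:
  assumes "long_only_feasible n w" "i \<in> {1..n}" "j \<in> {1..n}" "i \<noteq> j" "0 \<le> e" "e \<le> w i"
  shows "long_only_feasible n (w(i := w i - e, j := w j + e))"
proof -
  have "(\<Sum>k=1..n. (w(i := w i - e, j := w j + e)) k - w k) = 0"
    using sum_transfer_diff[OF _ assms(2-4), where f = "\<lambda>k x. x" and w = w and e = e] by simp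
  then show ?thesis
    using assms unfolding long_only_feasible_def by (auto simp: sum_subtractf)
qed

lemma long_only_feasible_ex_pos:
  assumes "long_only_feasible n w"
  obtains i where "i \<in> {1..n}" "0 < w i"
proof -
  have "\<not> (\<forall>i\<in>{1..n}. w i \<le> 0)"
    using assms sum_nonpos[of "{1..n}" w] unfolding long_only_feasible_def by force
  then show ?thesis using that by force
qed

lemma lomv_marginal_var_le:
  assumes s2: "s2 \<ge> 0" and d2: "\<forall>i\<in>{1..n}. d2 i > 0"
    and lomv: "is_lomv n (one_factor_cov s2 beta d2) w"
    and ij: "i \<in> {1..n}" "j \<in> {1..n}" and "0 < w i"
  shows "marginal_var n s2 beta d2 w i \<le> marginal_var n s2 beta d2 w j"
proof (rule ccontr)
  let ?g = "marginal_var n s2 beta d2 w"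
  assume "\<not> ?thesis"
  then have gap: "?g j < ?g i" by simp
  then have "i \<noteq> j" by auto
  define C where "C = s2 * (beta j - beta i)^2 + d2 i + d2 j"
  have "C > 0"
    using d2 ij s2 unfolding C_def by (simp add: add_pos_pos add_nonneg_pos)
  \<comment> \<open>Capped by \<open>w i\<close> for feasibility and by the gap over \<open>C\<close> so that the first-order gain
    of the transfer dominates its quadratic cost.\<close>
  define e where "e = min (w i) ((?g i - ?g j) / C)"
  have "0 < e" "e \<le> w i"
    using \<open>0 < w i\<close> gap \<open>C > 0\<close> by (simp_all add: e_def)
  have "e * C \<le> ?g i - ?g j"
    using \<open>C > 0\<close> by (simp add: e_def min_def field_simps)
  then have "e^2 * C < 2 * e * (?g i - ?g j)"
    using \<open>0 < e\<close> gap by (simp add: power2_eq_square)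
  then have "one_factor_var n s2 beta d2 (w(i := w i - e, j := w j + e))
      < one_factor_var n s2 beta d2 w"
    unfolding one_factor_var_transfer[OF ij \<open>i \<noteq> j\<close>] C_def by (simp add: algebra_simps)
  moreover have "long_only_feasible n (w(i := w i - e, j := w j + e))"
    using lomv \<open>0 < e\<close> \<open>e \<le> w i\<close> \<open>i \<noteq> j\<close> ij
    by (intro long_only_feasible_transfer) (auto simp: is_lomv_def)
  ultimately show False
    using lomv unfolding is_lomv_def port_var_one_factor_cov by (meson not_le)
qed

definition kkt_point ::
  "nat \<Rightarrow> real \<Rightarrow> (nat \<Rightarrow> real) \<Rightarrow> (nat \<Rightarrow> real) \<Rightarrow> (nat \<Rightarrow> real) \<Rightarrow> real \<Rightarrow> bool" where
  "kkt_point n s2 beta d2 w lam \<longleftrightarrow> long_only_feasible n w \<and>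
     (\<forall>i\<in>{1..n}. lam \<le> marginal_var n s2 beta d2 w i) \<and>
     (\<forall>i\<in>{1..n}. 0 < w i \<longrightarrow> marginal_var n s2 beta d2 w i = lam)"

lemma kkt_pointD:
  assumes "kkt_point n s2 beta d2 w lam" "i \<in> {1..n}"
  shows "0 \<le> w i" "lam \<le> marginal_var n s2 beta d2 w i"
    and "0 < w i \<Longrightarrow> marginal_var n s2 beta d2 w i = lam"
  using assms by (auto simp: kkt_point_def long_only_feasible_def)

lemma kkt_point_multiplier_le_inactive:
  assumes "kkt_point n s2 beta d2 w lam" "i \<in> {1..n}" "i \<notin> active_set n w"
  shows "lam \<le> s2 * beta i * factor_exposure n beta w"
proof -
  have "w i = 0"
    using kkt_pointD(1)[OF assms(1,2)] assms(2,3) by (simp add: active_set_def)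
  then show ?thesis
    using kkt_pointD(2)[OF assms(1,2)] by (simp add: marginal_var_def)
qed

lemma lomv_imp_kkt_point:
  assumes "s2 \<ge> 0" "\<forall>i\<in>{1..n}. d2 i > 0" "is_lomv n (one_factor_cov s2 beta d2) w"
  obtains lam where "kkt_point n s2 beta d2 w lam"
proof -
  have feasible: "long_only_feasible n w"
    using assms(3) by (simp add: is_lomv_def)
  then obtain i0 where "i0 \<in> {1..n}" "0 < w i0"
    by (rule long_only_feasible_ex_pos)
  then have "kkt_point n s2 beta d2 w (marginal_var n s2 beta d2 w i0)"
    using feasible lomv_marginal_var_le[OF assms] unfolding kkt_point_def
    by (meson order_antisym)
  then show ?thesis by (rule that)
qed

lemma sum_weight_marginal_var:
  "(\<Sum>i=1..n. w i * marginal_var n s2 beta d2 w i) = one_factor_var n s2 beta d2 w"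
proof -
  have "(\<Sum>i=1..n. w i * marginal_var n s2 beta d2 w i)
      = s2 * factor_exposure n beta w * (\<Sum>i=1..n. beta i * w i) + (\<Sum>i=1..n. d2 i * (w i)^2)"
    unfolding marginal_var_def sum_distrib_left sum.distrib[symmetric]
    by (intro sum.cong refl) (simp add: power2_eq_square algebra_simps)
  then show ?thesis
    by (simp add: one_factor_var_def factor_exposure_def power2_eq_square)
qed

lemma kkt_point_multiplier_eq:
  assumes "kkt_point n s2 beta d2 w lam"
  shows "lam = one_factor_var n s2 beta d2 w"
proof -
  have "one_factor_var n s2 beta d2 w = (\<Sum>i=1..n. w i * marginal_var n s2 beta d2 w i)"
    by (rule sum_weight_marginal_var[symmetric])
  also have "\<dots> = (\<Sum>i=1..n. lam * w i)"
    using assms by (intro sum.cong refl) (force simp: kkt_point_def long_only_feasible_def)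
  also have "\<dots> = lam"
    using assms by (simp add: kkt_point_def long_only_feasible_def sum_distrib_left[symmetric])
  finally show ?thesis by simp
qed

lemma one_factor_var_pos:
  assumes "s2 \<ge> 0" "\<forall>i\<in>{1..n}. d2 i > 0" "long_only_feasible n w"
  shows "0 < one_factor_var n s2 beta d2 w"
proof -
  obtain i0 where i0: "i0 \<in> {1..n}" "0 < w i0"
    using assms(3) by (rule long_only_feasible_ex_pos)
  have "0 < d2 i0 * (w i0)^2"
    using assms(2) i0 by simp
  also have "\<dots> \<le> (\<Sum>i=1..n. d2 i * (w i)^2)"
    using assms(2) i0 by (intro member_le_sum) (auto simp: less_imp_le)
  finally show ?thesis
    using assms(1) by (simp add: one_factor_var_def add_nonneg_pos)
qed

lemma kkt_point_multiplier_pos: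
  assumes "s2 \<ge> 0" "\<forall>i\<in>{1..n}. d2 i > 0" "kkt_point n s2 beta d2 w lam"
  shows "lam > 0"
  using one_factor_var_pos[OF assms(1,2)] assms(3)
  by (simp add: kkt_point_multiplier_eq[OF assms(3)] kkt_point_def)

lemma kkt_point_var_le:
  assumes "s2 \<ge> 0" "kkt_point n s2 beta d2 w lam" "long_only_feasible n v"
  shows "one_factor_var n s2 beta d2 w + (\<Sum>i=1..n. d2 i * (v i - w i)^2)
      \<le> one_factor_var n s2 beta d2 v"
proof -
  let ?g = "marginal_var n s2 beta d2 w"
  have "lam = (\<Sum>i=1..n. v i * lam)"
    using assms(3) by (simp add: long_only_feasible_def sum_distrib_right[symmetric])
  also have "\<dots> \<le> (\<Sum>i=1..n. v i * ?g i)"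
    using assms(2,3)
    by (intro sum_mono mult_left_mono) (auto simp: kkt_point_def long_only_feasible_def)
  moreover have "(\<Sum>i=1..n. (v i - w i) * ?g i) = (\<Sum>i=1..n. v i * ?g i) - lam"
    unfolding kkt_point_multiplier_eq[OF assms(2)] sum_weight_marginal_var[symmetric]
    by (simp add: left_diff_distrib sum_subtractf)
  ultimately have "0 \<le> (\<Sum>i=1..n. (v i - w i) * ?g i)"
    by simp
  then show ?thesis
    using assms(1) by (simp add: one_factor_var_expand[where v = v and w = w])
qed

lemma kkt_point_imp_lomv:
  assumes "s2 \<ge> 0" "\<forall>i\<in>{1..n}. d2 i \<ge> 0" "kkt_point n s2 beta d2 w lam"
  shows "is_lomv n (one_factor_cov s2 beta d2) w"
proof -
  have "one_factor_var n s2 beta d2 w \<le> one_factor_var n s2 beta d2 v"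
    if "long_only_feasible n v" for v
    using kkt_point_var_le[OF assms(1,3) that] assms(2)
      sum_nonneg[of "{1..n}" "\<lambda>i. d2 i * (v i - w i)^2"]
    by force
  then show ?thesis
    using assms(3) by (simp add: is_lomv_def kkt_point_def port_var_one_factor_cov)
qed

lemma kkt_point_lomv_unique:
  assumes "s2 \<ge> 0" "\<forall>i\<in>{1..n}. d2 i > 0" "kkt_point n s2 beta d2 w lam"
    and "is_lomv n (one_factor_cov s2 beta d2) v"
  shows "\<forall>i\<in>{1..n}. v i = w i"
proof -
  have "one_factor_var n s2 beta d2 v \<le> one_factor_var n s2 beta d2 w"
    using assms(3,4) by (simp add: is_lomv_def kkt_point_def port_var_one_factor_cov)
  then have "(\<Sum>i=1..n. d2 i * (v i - w i)^2) \<le> 0"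
    using kkt_point_var_le[OF assms(1,3)] assms(4) by (force simp: is_lomv_def)
  then have "(\<Sum>i=1..n. d2 i * (v i - w i)^2) = 0"
    using assms(2) by (intro antisym sum_nonneg) (auto simp: less_imp_le)
  then show ?thesis
    using assms(2) sum_nonneg_eq_0_iff[of "{1..n}" "\<lambda>i. d2 i * (v i - w i)^2"]
    by (force simp: less_imp_le)
qed

lemma kkt_point_exposure_nonneg:
  assumes s2: "s2 \<ge> 0" and d2: "\<forall>i\<in>{1..n}. d2 i > 0"
    and tilt: "(\<Sum>i=1..n. beta i / d2 i) \<ge> 0"
    and kkt: "kkt_point n s2 beta d2 w lam"
  shows "factor_exposure n beta w \<ge> 0"
proof (rule ccontr)
  define b where "b = factor_exposure n beta w"
  assume "\<not> ?thesis"
  then have "b < 0" by (simp add: b_def)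
  have "lam > 0"
    using kkt_point_multiplier_pos[OF s2 d2 kkt] .
  have "lam * (beta i / d2 i) \<le> beta i * w i" if i: "i \<in> {1..n}" for i
  proof (cases "0 < w i")
    case True
    have lam_eq: "lam = s2 * beta i * b + d2 i * w i"
      using kkt_pointD(3)[OF kkt i True] by (simp add: marginal_var_def b_def)
    have "beta i * w i * d2 i = lam * beta i - s2 * (beta i)^2 * b"
      unfolding lam_eq by (simp add: algebra_simps power2_eq_square)
    moreover have "0 \<le> - s2 * (beta i)^2 * b"
      using s2 \<open>b < 0\<close> by (simp add: mult_nonneg_nonpos)
    ultimately have "lam * beta i \<le> beta i * w i * d2 i"
      by linarith
    then show ?thesis
      using d2[rule_format, OF i] by (simp add: pos_divide_le_eq)
  next
    case False
    then have "w i = 0"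
      using kkt_pointD(1)[OF kkt i] by simp
    have "lam \<le> s2 * beta i * b"
      using kkt_point_multiplier_le_inactive[OF kkt i] False by (simp add: active_set_def b_def)
    moreover have "s2 * beta i * b \<le> 0" if "beta i \<ge> 0"
      using s2 \<open>b < 0\<close> that by (simp add: mult_nonneg_nonpos)
    ultimately have "beta i < 0"
      using \<open>lam > 0\<close> by fastforce
    then show ?thesis
      using \<open>w i = 0\<close> \<open>lam > 0\<close> d2[rule_format, OF i]
      by (simp add: divide_nonpos_pos mult_pos_neg less_imp_le)
  qed
  then have "lam * (\<Sum>i=1..n. beta i / d2 i) \<le> b"
    unfolding b_def factor_exposure_def sum_distrib_left by (rule sum_mono)
  moreover have "0 \<le> lam * (\<Sum>i=1..n. beta i / d2 i)"
    using \<open>lam > 0\<close> tilt by simp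
  ultimately show False
    using \<open>b < 0\<close> by simp
qed

lemma kkt_point_exposure_pos:
  assumes s2: "s2 \<ge> 0" and d2: "\<forall>i\<in>{1..n}. d2 i > 0"
    and tilt: "(\<Sum>i=1..n. beta i / d2 i) \<ge> 0"
    and kkt: "kkt_point n s2 beta d2 w lam"
    and "active_set n w \<noteq> {1..n}"
  shows "factor_exposure n beta w > 0"
proof -
  have "lam > 0"
    using kkt_point_multiplier_pos[OF s2 d2 kkt] .
  have "factor_exposure n beta w \<noteq> 0"
  proof
    assume "factor_exposure n beta w = 0"
    then have "0 < d2 i * w i" if "i \<in> {1..n}" for i
      using kkt_pointD(2)[OF kkt that] \<open>lam > 0\<close> by (simp add: marginal_var_def)
    then have "0 < w i" if "i \<in> {1..n}" for i
      using d2 that by (meson zero_less_mult_pos)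
    then have "active_set n w = {1..n}"
      by (auto simp: active_set_def)
    with \<open>active_set n w \<noteq> {1..n}\<close> show False ..
  qed
  then show ?thesis
    using kkt_point_exposure_nonneg[OF assms(1-4)] by simp
qed

lemma kkt_point_active_set_down_closed:
  assumes s2: "s2 \<ge> 0" and d2: "\<forall>i\<in>{1..n}. d2 i > 0"
    and kkt: "kkt_point n s2 beta d2 w lam"
    and exposure: "factor_exposure n beta w > 0"
    and mono: "\<forall>i j. 1 \<le> i \<longrightarrow> i \<le> j \<longrightarrow> j \<le> n \<longrightarrow> beta i \<le> beta j"
    and "1 \<le> i" "i \<le> j" "j \<in> active_set n w"
  shows "i \<in> active_set n w"
proof (rule ccontr)
  let ?b = "factor_exposure n beta w"
  assume "i \<notin> active_set n w"
  have i: "i \<in> {1..n}" and j: "j \<in> {1..n}" "0 < w j"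
    using assms(6-8) by (auto simp: active_set_def)
  have "lam \<le> s2 * beta i * ?b"
    using kkt_point_multiplier_le_inactive[OF kkt i \<open>i \<notin> active_set n w\<close>] .
  also have "\<dots> \<le> s2 * beta j * ?b"
    using mono assms(6,7) j s2 exposure by (intro mult_right_mono mult_left_mono) auto
  also have "\<dots> < s2 * beta j * ?b + d2 j * w j"
    using d2 j by simp
  also have "\<dots> = lam"
    using kkt_pointD(3)[OF kkt j] by (simp add: marginal_var_def)
  finally show False by simp
qed

lemma down_closed_eq_atLeastAtMost_card:
  fixes A :: "nat set"
  assumes "A \<subseteq> {1..n}" and down: "\<And>i j. 1 \<le> i \<Longrightarrow> i \<le> j \<Longrightarrow> j \<in> A \<Longrightarrow> i \<in> A"
  shows "A = {1..card A}"
proof -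
  have "finite A"
    using assms(1) finite_subset by blast
  have "A \<subseteq> {1..card A}"
  proof
    fix j assume "j \<in> A"
    then have "{1..j} \<subseteq> A"
      using down by auto
    then have "card {1..j} \<le> card A"
      using \<open>finite A\<close> by (rule card_mono[rotated])
    then show "j \<in> {1..card A}"
      using \<open>j \<in> A\<close> assms(1) by auto
  qed
  then show ?thesis
    using \<open>finite A\<close> by (intro card_subset_eq) auto
qed

lemma kkt_point_multiplier_le_beyond_active:
  assumes s2: "s2 \<ge> 0" and d2: "\<forall>i\<in>{1..n}. d2 i > 0"
    and mono: "\<forall>i j. 1 \<le> i \<longrightarrow> i \<le> j \<longrightarrow> j \<le> n \<longrightarrow> beta i \<le> beta j"
    and tilt: "(\<Sum>i=1..n. beta i / d2 i) \<ge> 0"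
    and kkt: "kkt_point n s2 beta d2 w lam"
    and "card (active_set n w) < n"
    and "beta (card (active_set n w) + 1) \<le> x"
  shows "lam \<le> s2 * x * factor_exposure n beta w"
proof -
  define k where "k = card (active_set n w)"
  let ?b = "factor_exposure n beta w"
  have "active_set n w \<noteq> {1..n}"
    using \<open>card (active_set n w) < n\<close> by auto
  then have exposure: "?b > 0"
    by (rule kkt_point_exposure_pos[OF s2 d2 tilt kkt])
  have "active_set n w = {1..k}"
    unfolding k_def using kkt_point_active_set_down_closed[OF s2 d2 kkt exposure mono]
    by (intro down_closed_eq_atLeastAtMost_card) (auto simp: active_set_def)
  moreover have "k < n"
    using \<open>card (active_set n w) < n\<close> by (simp add: k_def)
  ultimately have "lam \<le> s2 * beta (k + 1) * ?b"
    using kkt_point_multiplier_le_inactive[OF kkt, of "k + 1"] by simp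
  also have "\<dots> \<le> s2 * x * ?b"
    using assms(7) s2 exposure unfolding k_def by (intro mult_right_mono mult_left_mono) auto
  finally show ?thesis .
qed

definition extend_zero :: "nat \<Rightarrow> (nat \<Rightarrow> real) \<Rightarrow> nat \<Rightarrow> real" where
  "extend_zero p w i = (if i \<le> p then w i else 0)"

lemma sum_extend_zero:
  assumes "p \<le> n"
  shows "(\<Sum>i=1..n. f i * extend_zero p w i) = (\<Sum>i=1..p. f i * w i)"
proof -
  have "(\<Sum>i=1..n. f i * extend_zero p w i) = (\<Sum>i=1..p. f i * extend_zero p w i)"
    using assms by (intro sum.mono_neutral_right) (auto simp: extend_zero_def)
  then show ?thesis
    by (simp add: extend_zero_def)
qed

lemma kkt_point_extend_zero:
  assumes kkt: "kkt_point p s2 beta d2 w lam" and "p \<le> n"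
    and new: "\<forall>i\<in>{p<..n}. lam \<le> s2 * beta i * factor_exposure p beta w"
  shows "kkt_point n s2 beta d2 (extend_zero p w) lam"
proof -
  have exposure: "factor_exposure n beta (extend_zero p w) = factor_exposure p beta w"
    using sum_extend_zero[OF \<open>p \<le> n\<close>] by (simp add: factor_exposure_def)
  have "long_only_feasible n (extend_zero p w)"
    using kkt sum_extend_zero[OF \<open>p \<le> n\<close>, of "\<lambda>_. 1"]
    by (auto simp: kkt_point_def long_only_feasible_def extend_zero_def)
  moreover have "marginal_var n s2 beta d2 (extend_zero p w) i =
      (if i \<le> p then marginal_var p s2 beta d2 w i else s2 * beta i * factor_exposure p beta w)" for i
    by (simp add: marginal_var_def exposure extend_zero_def)
  ultimately show ?thesis
    using kkt new by (auto simp: kkt_point_def extend_zero_def not_le)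
qed

lemma active_set_extend_zero:
  "p \<le> n \<Longrightarrow> active_set n (extend_zero p w) = active_set p w"
  by (auto simp: active_set_def extend_zero_def)

lemma ball_greaterThanAtMost_add_iff:
  fixes p q :: nat
  shows "(\<forall>i\<in>{p<..p + q}. P i) \<longleftrightarrow> (\<forall>m\<in>{1..q}. P (p + m))"
proof
  assume all: "\<forall>m\<in>{1..q}. P (p + m)"
  show "\<forall>i\<in>{p<..p + q}. P i"
  proof
    fix i
    assume "i \<in> {p<..p + q}"
    then have "i - p \<in> {1..q}" "p + (i - p) = i"
      by auto
    then show "P i"
      using all by metis
  qed
qed auto

theorem corollary1:
  fixes p q :: nat and s2 :: real and beta d2 wL :: "nat \<Rightarrow> real"
  assumes "p \<ge> 1"
    and "s2 > 0"
    and "\<exists>i\<in>{1..p}. beta i \<noteq> 0"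
    and "\<forall>i j. 1 \<le> i \<longrightarrow> i \<le> j \<longrightarrow> j \<le> p \<longrightarrow> beta i \<le> beta j"
    and "\<forall>i\<in>{1..p}. d2 i > 0"
    and "(\<Sum>i=1..p. beta i / d2 i) \<ge> 0"
    and "is_lomv p (one_factor_cov s2 beta d2) wL"
    and "card (active_set p wL) < p"
    and "q > 0"
    and "\<forall>m\<in>{1..q}. d2 (p + m) > 0"
    and "\<forall>m\<in>{1..q}. beta (p + m) \<ge> beta (card (active_set p wL) + 1)"
  shows "(\<exists>w. is_lomv (p + q) (one_factor_cov s2 beta d2) w) \<and>
         (\<forall>w. is_lomv (p + q) (one_factor_cov s2 beta d2) w \<longrightarrow>
              active_set (p + q) w = active_set p wL \<and>
              (\<forall>i\<in>active_set p wL. w i = wL i) \<and>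
              (\<forall>m\<in>{1..q}. w (p + m) = 0))"
proof -
  let ?b = "factor_exposure p beta wL"
  have s2: "s2 \<ge> 0"
    using assms(2) by simp
  obtain lam where kkt: "kkt_point p s2 beta d2 wL lam"
    using lomv_imp_kkt_point[OF s2 assms(5,7)] .
  have "\<forall>m\<in>{1..q}. lam \<le> s2 * beta (p + m) * ?b"
    using kkt_point_multiplier_le_beyond_active[OF s2 assms(5,4,6) kkt assms(8)] assms(11) by blast
  then have kkt_ext: "kkt_point (p + q) s2 beta d2 (extend_zero p wL) lam"
    using kkt_point_extend_zero[OF kkt] by (simp add: ball_greaterThanAtMost_add_iff)
  have d2_ext: "\<forall>i\<in>{1..p + q}. d2 i > 0"
    using assms(5,10) ball_greaterThanAtMost_add_iff[of p q "\<lambda>i. d2 i > 0"]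
    by (metis greaterThanAtMost_iff atLeastAtMost_iff not_le)
  show ?thesis
  proof (intro conjI allI impI exI)
    show "is_lomv (p + q) (one_factor_cov s2 beta d2) (extend_zero p wL)"
      using kkt_point_imp_lomv[OF s2 _ kkt_ext] d2_ext by (simp add: less_imp_le)
  next
    fix w
    assume "is_lomv (p + q) (one_factor_cov s2 beta d2) w"
    then have agree: "\<forall>i\<in>{1..p + q}. w i = extend_zero p wL i"
      using kkt_point_lomv_unique[OF s2 d2_ext kkt_ext] by simp
    then have "active_set (p + q) w = active_set (p + q) (extend_zero p wL)"
      by (auto simp: active_set_def)
    then show "active_set (p + q) w = active_set p wL"
      by (simp add: active_set_extend_zero)
    show "\<forall>i\<in>active_set p wL. w i = wL i" "\<forall>m\<in>{1..q}. w (p + m) = 0"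
      using agree by (auto simp: active_set_def extend_zero_def)
  qed
qed

end
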